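(* Let $\mathcal{K}$ be a class of groups closed under homomorphic images, subgroups, and direct products of finitely many factors. If a group $G$ is conjugacy $\mathcal{K}$-separable, then for every finite normal subgroup $N$ of $G$ the quotient group $G/N$ is conjugacy $\mathcal{K}$-separable.
   Context: A group $G$ is conjugacy $\mathcal{K}$-separable if whenever $a,b\in G$ are not conjugate in $G$, there is a homomorphism $\varphi$ of $G$ onto a group $X\in\mathcal{K}$ such that $a\varphi$ and $b\varphi$ are not conjugate in $X$. *)

theory Defs
  imports "HOL-Algebra.Algebra"
begin

definition conjugate_in :: "('a, 'b) monoid_scheme \<Rightarrow> 'a \<Rightarrow> 'a \<Rightarrow> bool" where
  "conjugate_in G a b \<longleftrightarrow> (\<exists>g\<in>carrier G. b = inv\<^bsub>G\<^esub> g \<otimes>\<^bsub>G\<^esub> a \<otimes>\<^bsub>G\<^esub> g)"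

definition fin_dir_prod :: "(nat \<Rightarrow> ('c, 'd) monoid_scheme) \<Rightarrow> nat \<Rightarrow> (nat \<Rightarrow> 'c) monoid" where
  "fin_dir_prod Xs n =
     \<lparr> carrier = (\<Pi>\<^sub>E i\<in>{..<n}. carrier (Xs i)),
       monoid.mult = (\<lambda>x y. \<lambda>i\<in>{..<n}. x i \<otimes>\<^bsub>Xs i\<^esub> y i),
       monoid.one = (\<lambda>i\<in>{..<n}. \<one>\<^bsub>Xs i\<^esub>) \<rparr>"

text \<open>A class of groups is modelled by a predicate K on groups whose
  elements live in a fixed universe type 'c.  Conjugacy K-separability:\<close>
definition conj_K_separable :: "('c monoid \<Rightarrow> bool) \<Rightarrow> ('a, 'b) monoid_scheme \<Rightarrow> bool" where
  "conj_K_separable K G \<longleftrightarrow>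
     (\<forall>a\<in>carrier G. \<forall>b\<in>carrier G. \<not> conjugate_in G a b \<longrightarrow>
        (\<exists>Q h. K (Q :: 'c monoid) \<and> h \<in> hom G Q \<and> h ` carrier G = carrier Q \<and>
             \<not> conjugate_in Q (h a) (h b)))"

end

theory Submission
  imports Defs
begin

(* If N a and N b are not conjugate in G/N, then a is conjugate in G to no n b with n in N.
   Separate a from each of the finitely many elements n b by a K-quotient of G and combine
   these quotients into the image Y of G in their direct product, which lies in K.  Factoring
   Y by the image of N yields a K-quotient of G/N.  A conjugacy there between the images of
   a and b would lift to a conjugacy in Y between the images of a and of some n b, and hence
   in the quotient chosen for n, which is impossible. *)

lemma (in group_hom) conjugate_in_hom:
  assumes "a \<in> carrier G" "conjugate_in G a b"
  shows "conjugate_in H (h a) (h b)"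
proof -
  obtain g where g: "g \<in> carrier G" "b = inv g \<otimes> a \<otimes> g"
    using assms(2) unfolding conjugate_in_def by blast
  then have "h b = inv\<^bsub>H\<^esub> h g \<otimes>\<^bsub>H\<^esub> h a \<otimes>\<^bsub>H\<^esub> h g"
    using assms(1) by simp
  with g(1) show ?thesis
    unfolding conjugate_in_def by auto
qed

lemma (in group_hom) conjugate_in_surj_hom_iff:
  assumes surj: "h ` carrier G = carrier H" and a: "a \<in> carrier G" and b: "b \<in> carrier G"
  shows "conjugate_in H (h a) (h b) \<longleftrightarrow> (\<exists>n\<in>kernel G H h. conjugate_in G a (n \<otimes> b))"
proof
  assume "conjugate_in H (h a) (h b)"
  then obtain y where y: "y \<in> carrier H" "h b = inv\<^bsub>H\<^esub> y \<otimes>\<^bsub>H\<^esub> h a \<otimes>\<^bsub>H\<^esub> y"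
    unfolding conjugate_in_def by blast
  then obtain g where g: "g \<in> carrier G" "y = h g"
    using surj by blast
  define c where "c = inv g \<otimes> a \<otimes> g"
  have c: "c \<in> carrier G" "h c = h b"
    using a g y unfolding c_def by simp_all
  have "c \<otimes> inv b \<in> kernel G H h"
    using b c by (simp add: kernel_def)
  moreover have "conjugate_in G a (c \<otimes> inv b \<otimes> b)"
    using b c g(1) unfolding conjugate_in_def c_def by (auto simp: G.m_assoc)
  ultimately show "\<exists>n\<in>kernel G H h. conjugate_in G a (n \<otimes> b)" ..
next
  assume "\<exists>n\<in>kernel G H h. conjugate_in G a (n \<otimes> b)"
  then obtain n where n: "n \<in> carrier G" "h n = \<one>\<^bsub>H\<^esub>" "conjugate_in G a (n \<otimes> b)"
    unfolding kernel_def by blast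
  then have "conjugate_in H (h a) (h (n \<otimes> b))"
    using a by (blast intro: conjugate_in_hom)
  with n(1,2) b show "conjugate_in H (h a) (h b)"
    by simp
qed

lemma (in normal) kernel_r_coset_hom: "kernel G (G Mod H) (r_coset G H) = H"
proof -
  have "H #> x = H \<longleftrightarrow> x \<in> H" if "x \<in> carrier G" for x
    using that coset_join1 coset_join2 is_subgroup by blast
  then show ?thesis
    using subset by (auto simp: kernel_def FactGroup_def)
qed

lemma (in normal) conjugate_in_FactGroup_iff:
  assumes "a \<in> carrier G" "b \<in> carrier G"
  shows "conjugate_in (G Mod H) (H #> a) (H #> b) \<longleftrightarrow> (\<exists>n\<in>H. conjugate_in G a (n \<otimes> b))"
proof -
  have "group_hom G (G Mod H) (r_coset G H)"
    by (simp add: group_hom_def group_hom_axioms_def is_group factorgroup_is_group r_coset_hom_Mod)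
  then show ?thesis
    using group_hom.conjugate_in_surj_hom_iff assms kernel_r_coset_hom
    by (metis carrier_FactGroup)
qed

lemma (in group_hom) FactGroup_universal_surj:
  assumes "N \<lhd> G" "N \<subseteq> kernel G H h" "h ` carrier G = carrier H"
  obtains f where "f \<in> hom (G Mod N) H" "f ` carrier (G Mod N) = carrier H"
    "\<And>x. x \<in> carrier G \<Longrightarrow> f (N #>\<^bsub>G\<^esub> x) = h x"
proof -
  obtain f where f: "f \<in> hom (G Mod N) H" "\<And>x. x \<in> carrier G \<Longrightarrow> f (N #>\<^bsub>G\<^esub> x) = h x"
    using FactGroup_universal_kernel[OF assms(1,2)] by blast
  moreover have "f ` carrier (G Mod N) = carrier H"
    using assms(3) f(2) by (simp add: carrier_FactGroup image_comp)
  ultimately show thesis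
    using that by blast
qed

lemma (in normal) weak_group_morphism_rcoset_choice:
  "weak_group_morphism (\<lambda>x. SOME y. y \<in> H #> x) H G"
proof (rule weak_group_morphismsI[OF normal_axioms])
  fix a b assume a: "a \<in> carrier G" and b: "b \<in> carrier G"
  have choice: "(SOME y. y \<in> H #> x) \<in> H #> x" if "x \<in> carrier G" for x
    using rcos_self[OF that is_subgroup] by (rule someI)
  have "(SOME y. y \<in> H #> a) = (SOME y. y \<in> H #> b) \<longleftrightarrow> H #> a = H #> b"
    using choice[OF a] choice[OF b] a b repr_independence[OF _ _ is_subgroup] by metis
  also have "\<dots> \<longleftrightarrow> a \<in> H #> b"
    using a b rcos_self[OF a is_subgroup] repr_independence[OF _ b is_subgroup] by blast
  also have "\<dots> \<longleftrightarrow> a \<otimes> inv b \<in> H"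
    by (rule rcos_module[OF is_group b a])
  finally show "(SOME y. y \<in> H #> a) = (SOME y. y \<in> H #> b) \<longleftrightarrow> a \<otimes> inv b \<in> H" .
qed

lemma fin_dir_prod_hom:
  assumes "\<And>i. i < n \<Longrightarrow> hs i \<in> hom G (Xs i)"
  shows "(\<lambda>x. \<lambda>i\<in>{..<n}. hs i x) \<in> hom G (fin_dir_prod Xs n)"
  using assms by (auto simp: hom_def fin_dir_prod_def Pi_def)

locale HSP_closed =
  fixes K :: "'c monoid \<Rightarrow> bool"
  assumes K_groups: "\<And>Q. K Q \<Longrightarrow> group Q"
    and K_hom_images: "\<And>Q R h. K Q \<Longrightarrow> group R \<Longrightarrow> h \<in> hom Q R \<Longrightarrow>
                         h ` carrier Q = carrier R \<Longrightarrow> K R"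
    and K_subgroups: "\<And>Q H. K Q \<Longrightarrow> subgroup H Q \<Longrightarrow> K (Q\<lparr>carrier := H\<rparr>)"
    and K_fin_products: "\<And>(Xs :: nat \<Rightarrow> 'c monoid) n. (\<forall>i<n. K (Xs i)) \<Longrightarrow>
                           \<exists>Z. K Z \<and> fin_dir_prod Xs n \<cong> Z"
begin

lemma hom_group_hom:
  assumes "group G" "K R" "h \<in> hom G R"
  shows "group_hom G R h"
  using assms K_groups by (simp add: group_hom_def group_hom_axioms_def)

(* Y Mod M is a group of cosets, of type 'c set rather than 'c; picking a representative
   of each coset transports it back to 'c, where K lives. *)
lemma quotient_in_class:
  assumes "K Y" "M \<lhd> Y"
  obtains R q where "K R" "q \<in> hom Y R" "q ` carrier Y = carrier R" "kernel Y R q = M"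
proof
  interpret M: normal M Y by fact
  let ?q = "\<lambda>x. SOME y. y \<in> M #>\<^bsub>Y\<^esub> x"
  have q: "weak_group_morphism ?q M Y"
    by (rule M.weak_group_morphism_rcoset_choice)
  show "?q \<in> hom Y (image_group ?q Y)"
    using M.weak_group_morphism_is_hom[OF q] .
  show "?q ` carrier Y = carrier (image_group ?q Y)"
    by (simp add: image_group_carrier)
  then show "K (image_group ?q Y)"
    using K_hom_images[OF \<open>K Y\<close>] M.image_group_is_group[OF q] M.weak_group_morphism_is_hom[OF q]
    by blast
  show "kernel Y (image_group ?q Y) ?q = M"
    using M.weak_group_morphism_ker[OF q] .
qed

lemma quotient_by_image_in_class:
  assumes "group G" "N \<lhd> G" "K Y" "\<psi> \<in> hom G Y" "\<psi> ` carrier G = carrier Y"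
  obtains R \<theta> where "K R" "\<theta> \<in> hom G R" "\<theta> ` carrier G = carrier R"
    "kernel G R \<theta> = {x \<in> carrier G. \<psi> x \<in> \<psi> ` N}"
proof -
  have "\<psi> ` N \<lhd> Y"
    using normal.surj_hom_normal_subgroup[OF \<open>N \<lhd> G\<close>] hom_group_hom assms by blast
  then obtain R q where R: "K R" "q \<in> hom Y R" "q ` carrier Y = carrier R"
    and q: "kernel Y R q = \<psi> ` N"
    using quotient_in_class[OF \<open>K Y\<close>] by blast
  show thesis
  proof
    show "K R" by fact
    show "q \<circ> \<psi> \<in> hom G R"
      using assms(4) R(2) by (rule hom_compose)
    show "(q \<circ> \<psi>) ` carrier G = carrier R"
      using assms(5) R(3) by (simp only: image_comp[symmetric])
    have "\<psi> x \<in> carrier Y" if "x \<in> carrier G" for x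
      using assms(4) that by (rule hom_in_carrier)
    then show "kernel G R (q \<circ> \<psi>) = {x \<in> carrier G. \<psi> x \<in> \<psi> ` N}"
      using q unfolding kernel_def by auto
  qed
qed

lemma joint_quotient_in_class:
  assumes "group G" "finite I"
    and "\<And>i. i \<in> I \<Longrightarrow> K (Xs i)" "\<And>i. i \<in> I \<Longrightarrow> hs i \<in> hom G (Xs i)"
  obtains Y \<psi> where "K Y" "\<psi> \<in> hom G Y" "\<psi> ` carrier G = carrier Y"
    "\<And>x y i. \<lbrakk>x \<in> carrier G; y \<in> carrier G; \<psi> x = \<psi> y; i \<in> I\<rbrakk> \<Longrightarrow> hs i x = hs i y"
proof -
  obtain k :: nat and e where I: "I = e ` {i. i < k}"
    using \<open>finite I\<close> by (auto simp: finite_conv_nat_seg_image)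
  define \<Phi> where "\<Phi> x = (\<lambda>j\<in>{..<k}. hs (e j) x)" for x
  have \<Phi>: "\<Phi> \<in> hom G (fin_dir_prod (Xs \<circ> e) k)"
    unfolding \<Phi>_def using assms(4) I by (intro fin_dir_prod_hom) auto
  obtain Z \<iota> where Z: "K Z" and \<iota>: "\<iota> \<in> iso (fin_dir_prod (Xs \<circ> e) k) Z"
    using K_fin_products[of k "Xs \<circ> e"] assms(3) I unfolding is_iso_def by auto
  define \<psi> where "\<psi> = \<iota> \<circ> \<Phi>"
  have "\<psi> \<in> hom G Z"
    unfolding \<psi>_def using \<Phi> \<iota> by (simp add: hom_compose iso_def)
  then have "subgroup (\<psi> ` carrier G) Z"
    using hom_group_hom[OF \<open>group G\<close> Z] group_hom.img_is_subgroup by blast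
  show thesis
  proof
    show "K (Z\<lparr>carrier := \<psi> ` carrier G\<rparr>)"
      using K_subgroups[OF Z] \<open>subgroup (\<psi> ` carrier G) Z\<close> .
    show "\<psi> \<in> hom G (Z\<lparr>carrier := \<psi> ` carrier G\<rparr>)"
      using \<open>\<psi> \<in> hom G Z\<close> by (auto simp: hom_def)
    show "\<psi> ` carrier G = carrier (Z\<lparr>carrier := \<psi> ` carrier G\<rparr>)"
      by simp
  next
    fix x y i assume xy: "x \<in> carrier G" "y \<in> carrier G" "\<psi> x = \<psi> y" and "i \<in> I"
    then obtain j where j: "j < k" "i = e j"
      using I by blast
    have "\<Phi> x \<in> carrier (fin_dir_prod (Xs \<circ> e) k)" "\<Phi> y \<in> carrier (fin_dir_prod (Xs \<circ> e) k)"
      using xy(1,2) \<Phi> by (auto simp: hom_in_carrier)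
    then have "\<Phi> x = \<Phi> y"
      using xy(3) \<iota> unfolding \<psi>_def iso_def bij_betw_def inj_on_def by auto
    then show "hs i x = hs i y"
      using j unfolding \<Phi>_def by (metis lessThan_iff restrict_apply')
  qed
qed

lemma separating_quotient_in_class:
  assumes "group G" "conj_K_separable K G" "N \<lhd> G" "finite N"
    and a: "a \<in> carrier G" and b: "b \<in> carrier G"
    and not_conj: "\<And>n. n \<in> N \<Longrightarrow> \<not> conjugate_in G a (n \<otimes>\<^bsub>G\<^esub> b)"
  obtains R \<theta> where "K R" "\<theta> \<in> hom G R" "\<theta> ` carrier G = carrier R" "N \<subseteq> kernel G R \<theta>"
    "\<not> conjugate_in R (\<theta> a) (\<theta> b)"
proof -
  interpret N: normal N G by fact
  have "\<exists>Q \<phi>. K Q \<and> \<phi> \<in> hom G Q \<and> \<not> conjugate_in Q (\<phi> a) (\<phi> (n \<otimes>\<^bsub>G\<^esub> b))"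
    if "n \<in> N" for n
  proof -
    have "n \<otimes>\<^bsub>G\<^esub> b \<in> carrier G"
      using that b N.subset by blast
    then show ?thesis
      using assms(2) not_conj[OF that] a unfolding conj_K_separable_def by blast
  qed
  then obtain Xs hs where Xs: "\<And>n. n \<in> N \<Longrightarrow> K (Xs n)" "\<And>n. n \<in> N \<Longrightarrow> hs n \<in> hom G (Xs n)"
    and hs: "\<And>n. n \<in> N \<Longrightarrow> \<not> conjugate_in (Xs n) (hs n a) (hs n (n \<otimes>\<^bsub>G\<^esub> b))"
    by metis
  obtain Y \<psi> where Y: "K Y" "\<psi> \<in> hom G Y" "\<psi> ` carrier G = carrier Y"
    and \<psi>: "\<And>x y n. \<lbrakk>x \<in> carrier G; y \<in> carrier G; \<psi> x = \<psi> y; n \<in> N\<rbrakk> \<Longrightarrow> hs n x = hs n y"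
    using joint_quotient_in_class[of G N Xs hs] \<open>group G\<close> \<open>finite N\<close> Xs by blast
  obtain R \<theta> where R: "K R" "\<theta> \<in> hom G R" "\<theta> ` carrier G = carrier R"
    and \<theta>: "kernel G R \<theta> = {x \<in> carrier G. \<psi> x \<in> \<psi> ` N}"
    using quotient_by_image_in_class[OF \<open>group G\<close> \<open>N \<lhd> G\<close> Y] by blast
  show thesis
  proof
    show "N \<subseteq> kernel G R \<theta>"
      using \<theta> N.subset by auto
    show "\<not> conjugate_in R (\<theta> a) (\<theta> b)"
    proof
      assume "conjugate_in R (\<theta> a) (\<theta> b)"
      then obtain x where x: "x \<in> kernel G R \<theta>" "conjugate_in G a (x \<otimes>\<^bsub>G\<^esub> b)"
        using group_hom.conjugate_in_surj_hom_iff[OF hom_group_hom[OF \<open>group G\<close> R(1,2)] R(3) a b]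
        by blast
      then obtain n where n: "n \<in> N" "\<psi> x = \<psi> n" "x \<in> carrier G"
        using \<theta> by auto
      have "\<psi> (x \<otimes>\<^bsub>G\<^esub> b) = \<psi> (n \<otimes>\<^bsub>G\<^esub> b)"
        using n b N.subset Y(2) by (auto simp: hom_mult)
      then have "hs n (x \<otimes>\<^bsub>G\<^esub> b) = hs n (n \<otimes>\<^bsub>G\<^esub> b)"
        using n b N.subset by (auto intro: \<psi>)
      moreover have "conjugate_in (Xs n) (hs n a) (hs n (x \<otimes>\<^bsub>G\<^esub> b))"
        using hom_group_hom[OF \<open>group G\<close> Xs[OF n(1)]] a x(2) by (rule group_hom.conjugate_in_hom)
      ultimately show False
        using hs[OF n(1)] by simp
    qed
  qed (use R in auto)
qed

end

theorem proposition2: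
  fixes K :: "'c monoid \<Rightarrow> bool" and G :: "('a, 'b) monoid_scheme" and N :: "'a set"
  assumes K_groups: "\<And>Q. K Q \<Longrightarrow> group Q"
    and K_hom_images: "\<And>Q R h. K Q \<Longrightarrow> group R \<Longrightarrow> h \<in> hom Q R \<Longrightarrow>
                         h ` carrier Q = carrier R \<Longrightarrow> K R"
    and K_subgroups: "\<And>Q H. K Q \<Longrightarrow> subgroup H Q \<Longrightarrow> K (Q\<lparr>carrier := H\<rparr>)"
    and K_fin_products: "\<And>(Xs :: nat \<Rightarrow> 'c monoid) n. (\<forall>i<n. K (Xs i)) \<Longrightarrow>
                           \<exists>Z. K Z \<and> fin_dir_prod Xs n \<cong> Z"
    and "group G"
    and "conj_K_separable K G"
    and "N \<lhd> G"
    and "finite N"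
  shows "conj_K_separable K (G Mod N)"
  unfolding conj_K_separable_def
proof (intro ballI impI)
  interpret HSP_closed K
    by (rule HSP_closed.intro[OF K_groups K_hom_images K_subgroups K_fin_products])
  interpret N: normal N G by fact
  fix A B assume "A \<in> carrier (G Mod N)" "B \<in> carrier (G Mod N)"
    and not_conj: "\<not> conjugate_in (G Mod N) A B"
  then obtain a b where ab: "a \<in> carrier G" "b \<in> carrier G" "A = N #>\<^bsub>G\<^esub> a" "B = N #>\<^bsub>G\<^esub> b"
    by (auto simp: carrier_FactGroup)
  then have "\<And>n. n \<in> N \<Longrightarrow> \<not> conjugate_in G a (n \<otimes>\<^bsub>G\<^esub> b)"
    using not_conj N.conjugate_in_FactGroup_iff[OF ab(1,2)] by blast
  then obtain R \<theta> where R: "K R" "\<theta> \<in> hom G R" "\<theta> ` carrier G = carrier R" "N \<subseteq> kernel G R \<theta>"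
    and \<theta>: "\<not> conjugate_in R (\<theta> a) (\<theta> b)"
    using separating_quotient_in_class[OF \<open>group G\<close> \<open>conj_K_separable K G\<close> \<open>N \<lhd> G\<close> \<open>finite N\<close> ab(1,2)]
    by blast
  obtain F where "F \<in> hom (G Mod N) R" "F ` carrier (G Mod N) = carrier R"
    and F: "\<And>x. x \<in> carrier G \<Longrightarrow> F (N #>\<^bsub>G\<^esub> x) = \<theta> x"
    using group_hom.FactGroup_universal_surj[OF hom_group_hom[OF \<open>group G\<close> R(1,2)] \<open>N \<lhd> G\<close> R(4,3)]
    by blast
  moreover have "\<not> conjugate_in R (F A) (F B)"
    using \<theta> ab F by simp
  ultimately show "\<exists>Q h. K Q \<and> h \<in> hom (G Mod N) Q \<and> h ` carrier (G Mod N) = carrier Q \<and>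
                         \<not> conjugate_in Q (h A) (h B)"
    using R(1) by blast
qed

end
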